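(* Let $G$ be an uncountable group of regular cardinality $\gamma$. Then the ballean $\mathcal{B}(G)$ is decomposable in a direct product, i.e. it is asymorphic to $\mathcal{B}(Z)$ for some direct product $Z=\otimes_{\lambda<\delta}(Z_\lambda,e_\lambda)$ of a pointed family of non-empty sets.
   Context: For an infinite group $G$ with identity $e$, $\mathcal{B}(G)=(G,\mathcal{F},B)$ where $\mathcal{F}=\{A\subseteq G: e\in A, |A|<|G|\}$ and $B(g,A)=gA$. For balleans $(X_1,P_1,B_1)$, $(X_2,P_2,B_2)$ (sets with families of balls $B(x,\alpha)\subseteq X$ indexed by $x\in X,\alpha\in P$), a map $f:X_1\to X_2$ is a $\prec$-mapping if for every $\alpha\in P_1$ there is $\beta\in P_2$ with $f(B_1(x,\alpha))\subseteq B_2(f(x),\beta)$ for all $x$; a bijection $f$ is an asymorphism if $f$ and $f^{-1}$ are $\prec$-mappings. Given an ordinal $\delta$ and non-empty sets $Z_\lambda$ ($\lambda<\delta$) with chosen points $e_\lambda\in Z_\lambda$, the direct product $Z=\otimes_{\lambda<\delta}(Z_\lambda,e_\lambda)$ is the set of functions $f$ on $\{\lambda:\lambda<\delta\}$ with $f(\lambda)\in Z_\lambda$ and $f(\lambda)=e_\lambda$ for all but finitely many $\lambda$; its ballean is $\mathcal{B}(Z)=(Z,\{\lambda:\lambda<\delta\},B)$ with $B(f,\lambda)=\{g\in Z: g(\lambda')=f(\lambda')\text{ for all }\lambda\le\lambda'<\delta\}$. *)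

theory Defs
  imports "HOL-Algebra.Coset" "HOL-Library.Countable_Set"
begin

text \<open>A ballean is given by a support set X, a parameter set P and ball function B.\<close>

definition prec_mapping ::
  "'x set \<Rightarrow> 'p set \<Rightarrow> ('x \<Rightarrow> 'p \<Rightarrow> 'x set) \<Rightarrow>
   'y set \<Rightarrow> 'q set \<Rightarrow> ('y \<Rightarrow> 'q \<Rightarrow> 'y set) \<Rightarrow> ('x \<Rightarrow> 'y) \<Rightarrow> bool" where
  "prec_mapping X1 P1 B1 X2 P2 B2 f \<longleftrightarrow>
     (\<forall>\<alpha>\<in>P1. \<exists>\<beta>\<in>P2. \<forall>x\<in>X1. f ` (B1 x \<alpha>) \<subseteq> B2 (f x) \<beta>)"

definition asymorphism ::
  "'x set \<Rightarrow> 'p set \<Rightarrow> ('x \<Rightarrow> 'p \<Rightarrow> 'x set) \<Rightarrow>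
   'y set \<Rightarrow> 'q set \<Rightarrow> ('y \<Rightarrow> 'q \<Rightarrow> 'y set) \<Rightarrow> ('x \<Rightarrow> 'y) \<Rightarrow> bool" where
  "asymorphism X1 P1 B1 X2 P2 B2 f \<longleftrightarrow>
     bij_betw f X1 X2 \<and>
     prec_mapping X1 P1 B1 X2 P2 B2 f \<and>
     prec_mapping X2 P2 B2 X1 P1 B1 (inv_into X1 f)"

definition group_params :: "('a, 'b) monoid_scheme \<Rightarrow> 'a set set" where
  "group_params G = {A. A \<subseteq> carrier G \<and> \<one>\<^bsub>G\<^esub> \<in> A \<and>
                        (card_of A, card_of (carrier G)) \<in> ordLess}"

definition group_ball :: "('a, 'b) monoid_scheme \<Rightarrow> 'a \<Rightarrow> 'a set \<Rightarrow> 'a set" where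
  "group_ball G g A = g <#\<^bsub>G\<^esub> A"

text \<open>Direct product of a pointed family (Zs i, e i), indexed by a well-order r
  (representing the ordinal delta, with index set Field r).\<close>

definition dprod :: "('i \<times> 'i) set \<Rightarrow> ('i \<Rightarrow> 'z set) \<Rightarrow> ('i \<Rightarrow> 'z) \<Rightarrow> ('i \<Rightarrow> 'z) set" where
  "dprod r Zs e = {f. (\<forall>i\<in>Field r. f i \<in> Zs i) \<and>
                      (\<forall>i. i \<notin> Field r \<longrightarrow> f i = undefined) \<and>
                      finite {i\<in>Field r. f i \<noteq> e i}}"

definition dprod_ball ::
  "('i \<times> 'i) set \<Rightarrow> ('i \<Rightarrow> 'z set) \<Rightarrow> ('i \<Rightarrow> 'z) \<Rightarrow> ('i \<Rightarrow> 'z) \<Rightarrow> 'i \<Rightarrow> ('i \<Rightarrow> 'z) set" where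
  "dprod_ball r Zs e f i = {g \<in> dprod r Zs e. \<forall>j\<in>Field r. (i, j) \<in> r \<longrightarrow> g j = f j}"

end

theory Submission
  imports Defs "HOL-Algebra.Generated_Groups" "HOL-Algebra.Left_Coset"
begin

(*
  Well-order G by its initial ordinal and let L_l and U_l be the subgroups generated by the elements
  strictly below l and up to l.  Taking least elements as coset representatives, the l-th digit of g
  is the representative of (c^-1 g) L_l, where c represents g U_l; it ranges over the representatives
  of the L_l-cosets inside U_l.  Along the places where this digit differs from the representative of
  L_l itself, the representatives of g L_l strictly decrease, so only finitely many digits are
  nontrivial; conversely every finitely supported family of digits is realised, by correcting wrong
  digits from the top down.  Two elements have the same digits from l on iff they lie in the same coset
  of L_l, so the balls of radius l of the direct product are the images of the cosets x L_l.
  Regularity of |G| puts every subset of size < |G| into some L_l, and regularity together with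
  uncountability keeps every L_l of size < |G|.
*)

unbundle cardinal_syntax

section \<open>Well-orders and regular cardinals\<close>

lemma finite_if_strictly_antitone_into_wf:
  assumes wf: "wf R" and wo: "Well_order r" and S: "S \<subseteq> Field r"
    and antitone: "\<And>l m. l \<in> S \<Longrightarrow> m \<in> S \<Longrightarrow> (l, m) \<in> r \<Longrightarrow> l \<noteq> m \<Longrightarrow> (f m, f l) \<in> R"
  shows "finite S"
proof -
  interpret wo_rel r using wo by (simp add: wo_rel_def)
  have "\<forall>l\<in>S. f l = a \<longrightarrow> finite {m \<in> S. (l, m) \<in> r}" for a
    using wf
  proof (induction a rule: wf_induct_rule)
    case (less a)
    show ?case
    proof (intro ballI impI)
      fix l assume l: "l \<in> S" and a: "f l = a"
      let ?T = "{m \<in> S. (l, m) \<in> r} - {l}"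
      show "finite {m \<in> S. (l, m) \<in> r}"
      proof (cases "?T = {}")
        case True
        then show ?thesis by (auto intro: finite_subset[of _ "{l}"])
      next
        case False
        define l' where "l' = minim ?T"
        have "?T \<subseteq> Field r" using S by blast
        then have l': "l' \<in> ?T" and least: "\<And>m. m \<in> ?T \<Longrightarrow> (l', m) \<in> r"
          using minim_in[OF _ False] minim_least unfolding l'_def by auto
        have "(f l', a) \<in> R" using antitone l l' a by auto
        then have "finite {m \<in> S. (l', m) \<in> r}" using less l' by blast
        moreover have "{m \<in> S. (l, m) \<in> r} \<subseteq> insert l {m \<in> S. (l', m) \<in> r}" using least by blast
        ultimately show ?thesis using finite_subset by blast
      qed
    qed
  qed
  moreover have "S \<subseteq> {m \<in> S. (minim S, m) \<in> r}" and "minim S \<in> S" if "S \<noteq> {}"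
    using minim_least minim_in S that by auto
  ultimately show ?thesis using finite_subset by (cases "S = {}") blast+
qed

lemma (in wo_rel) finite_has_greatest:
  assumes "finite F" "F \<noteq> {}" "F \<subseteq> Field r"
  shows "\<exists>k\<in>F. \<forall>j\<in>F. (j, k) \<in> r"
  using assms
proof (induction F rule: finite_ne_induct)
  case (singleton x)
  then show ?case using REFL by (simp add: refl_on_def)
next
  case (insert x F)
  then obtain k where k: "k \<in> F" "\<forall>j\<in>F. (j, k) \<in> r" by auto
  have "x \<in> Field r" "k \<in> Field r" using insert k by auto
  then have "max2 x k \<in> insert x F" "(x, max2 x k) \<in> r" "(k, max2 x k) \<in> r"
    using max2_among[of x k] max2_greater[of x k] k by auto
  then show ?case using k TRANS unfolding trans_def by blast
qed

lemma regularCard_ordLess_bounded: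
  assumes r: "Card_order r" "regularCard r" and A: "A \<subseteq> Field r" "|A| <o r"
  shows "\<exists>a\<in>Field r. A \<subseteq> under r a"
proof -
  have "\<not> cofinal A r"
    using r A not_ordLess_ordIso unfolding regularCard_def by blast
  then obtain a where a: "a \<in> Field r" and not_above: "\<forall>b\<in>A. \<not> (a \<noteq> b \<and> (a, b) \<in> r)"
    unfolding cofinal_def by blast
  interpret wo_rel r using card_order_on_well_order_on[OF r(1)] by (simp add: wo_rel_def)
  have "(b, a) \<in> r" if "b \<in> A" for b
  proof (cases "a = b")
    case True
    then show ?thesis using REFL a by (simp add: refl_on_def)
  next
    case False
    then show ?thesis using TOTALS a that A(1) not_above by blast
  qed
  then show ?thesis using a by (auto simp: under_def)
qed

lemma card_of_nat_ordLess:
  assumes "\<not> countable A"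
  shows "|UNIV :: nat set| <o |A|"
proof -
  have "\<not> |A| \<le>o |UNIV :: nat set|"
  proof
    assume "|A| \<le>o |UNIV :: nat set|"
    then obtain f :: "'a \<Rightarrow> nat" where "inj_on f A" using card_of_ordLeq[of A "UNIV :: nat set"] by blast
    then show False using assms unfolding countable_def by blast
  qed
  then show ?thesis using not_ordLeq_iff_ordLess[OF card_of_Well_order card_of_Well_order] by blast
qed

section \<open>Generated subgroups and left cosets\<close>

primrec generate_stage :: "('a, 'b) monoid_scheme \<Rightarrow> 'a set \<Rightarrow> nat \<Rightarrow> 'a set" where
  "generate_stage G X 0 = insert \<one>\<^bsub>G\<^esub> (X \<union> m_inv G ` X)"
| "generate_stage G X (Suc n) = (\<lambda>(a, b). a \<otimes>\<^bsub>G\<^esub> b) ` (generate_stage G X n \<times> generate_stage G X n)"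

context group
begin

lemma generate_stage_subset_carrier: "X \<subseteq> carrier G \<Longrightarrow> generate_stage G X n \<subseteq> carrier G"
  by (induction n) auto

lemma one_in_generate_stage: "\<one> \<in> generate_stage G X n"
  by (induction n) (force simp: image_iff)+

lemma generate_stage_mono:
  assumes "X \<subseteq> carrier G" "n \<le> m"
  shows "generate_stage G X n \<subseteq> generate_stage G X m"
proof (rule lift_Suc_mono_le[OF _ assms(2)])
  fix k
  show "generate_stage G X k \<subseteq> generate_stage G X (Suc k)"
  proof
    fix x assume x: "x \<in> generate_stage G X k"
    moreover have "x \<in> carrier G" using x generate_stage_subset_carrier[OF assms(1)] by blast
    ultimately show "x \<in> generate_stage G X (Suc k)"
      using one_in_generate_stage
      by (auto intro!: image_eqI[where x="(x, \<one>)"])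
  qed
qed

lemma generate_subset_UN_stages:
  assumes X: "X \<subseteq> carrier G"
  shows "generate G X \<subseteq> (\<Union>n. generate_stage G X n)"
proof
  fix x assume "x \<in> generate G X"
  then show "x \<in> (\<Union>n. generate_stage G X n)"
  proof (induction x rule: generate.induct)
    case one
    then show ?case using one_in_generate_stage by blast
  next
    case (incl h)
    then have "h \<in> generate_stage G X 0" by simp
    then show ?case by blast
  next
    case (inv h)
    then have "inv h \<in> generate_stage G X 0" by simp
    then show ?case by blast
  next
    case (eng h1 h2)
    then obtain n m where "h1 \<in> generate_stage G X n" "h2 \<in> generate_stage G X m" by auto
    then have "h1 \<in> generate_stage G X (max n m)" "h2 \<in> generate_stage G X (max n m)"
      using generate_stage_mono[OF X] by (meson max.cobounded1 max.cobounded2 subsetD)+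
    then have "h1 \<otimes> h2 \<in> generate_stage G X (Suc (max n m))" by force
    then show ?case by blast
  qed
qed

lemma card_of_generate_ordLess:
  assumes \<kappa>: "Card_order \<kappa>" "regularCard \<kappa>" and nat: "|UNIV :: nat set| <o \<kappa>"
    and X: "X \<subseteq> carrier G" "|X| <o \<kappa>"
  shows "|generate G X| <o \<kappa>"
proof -
  have "|UNIV :: nat set| \<le>o |Field \<kappa>|"
    using ordLess_ordIso_trans[OF nat ordIso_symmetric[OF card_of_Field_ordIso[OF \<kappa>(1)]]]
    by (rule ordLess_imp_ordLeq)
  then have inf: "\<not> finite (Field \<kappa>)" using card_of_ordLeq_infinite infinite_UNIV_nat by blast
  have stable: "stable \<kappa>" using regularCard_stable[OF \<kappa>(1) inf \<kappa>(2)] .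
  have one: "|{\<one>}| <o \<kappa>"
    by (rule finite_ordLess_infinite[OF card_of_Well_order card_order_on_well_order_on[OF \<kappa>(1)]])
      (simp_all add: inf Field_card_of)
  have "|generate_stage G X n| <o \<kappa>" for n
  proof (induction n)
    case 0
    have "|m_inv G ` X| <o \<kappa>" by (rule ordLeq_ordLess_trans[OF card_of_image X(2)])
    then have "|X \<union> m_inv G ` X| <o \<kappa>"
      by (rule card_of_Un_ordLess_infinite_Field[OF inf \<kappa>(1) X(2)])
    then have "|{\<one>} \<union> (X \<union> m_inv G ` X)| <o \<kappa>"
      by (rule card_of_Un_ordLess_infinite_Field[OF inf \<kappa>(1) one])
    then show ?case by simp
  next
    case (Suc n)
    have "|generate_stage G X n \<times> generate_stage G X n| <o \<kappa>"
      using stable_elim[OF stable Suc Suc] by simp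
    then show ?case by (simp add: ordLeq_ordLess_trans[OF card_of_image])
  qed
  then have "|\<Union>n. generate_stage G X n| <o \<kappa>"
    by (rule stable_UNION[OF stable nat])
  then show ?thesis
    by (rule ordLeq_ordLess_trans[OF card_of_mono1[OF generate_subset_UN_stages[OF X(1)]]])
qed

lemma l_coset_mem_iff:
  assumes H: "subgroup H G" and a: "a \<in> carrier G"
  shows "x \<in> a <# H \<longleftrightarrow> x \<in> carrier G \<and> inv a \<otimes> x \<in> H"
  by (meson l_coset_carrier[OF _ a H] subgroup.lcos_module_imp[OF H is_group a]
      subgroup.lcos_module_rev[OF H is_group a])

lemma l_coset_eq_iff:
  assumes H: "subgroup H G" and a: "a \<in> carrier G" and b: "b \<in> carrier G"
  shows "a <# H = b <# H \<longleftrightarrow> inv a \<otimes> b \<in> H"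
proof
  assume "a <# H = b <# H"
  then show "inv a \<otimes> b \<in> H" using lcos_self[OF b H] l_coset_mem_iff[OF H a] by blast
next
  assume "inv a \<otimes> b \<in> H"
  then have "b \<in> a <# H" using l_coset_mem_iff[OF H a] b by blast
  then show "a <# H = b <# H" using l_repr_independence[OF _ a H] by blast
qed

lemma inv_mult_cancel_left:
  assumes "c \<in> carrier G" "x \<in> carrier G" "g \<in> carrier G"
  shows "inv (c \<otimes> x) \<otimes> (c \<otimes> g) = inv x \<otimes> g"
  using assms by (simp add: inv_mult_group m_assoc[symmetric]) (simp add: m_assoc)

lemma l_coset_mult_eq:
  assumes H: "subgroup H G" and a: "a \<in> carrier G" and h: "h \<in> H"
  shows "(a \<otimes> h) <# H = a <# H"
proof -
  have "a \<otimes> h \<in> a <# H" using h by (auto simp: l_coset_def)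
  then show ?thesis using l_repr_independence[OF _ a H] by simp
qed

lemma l_coset_mono: "H \<subseteq> K \<Longrightarrow> a <# H \<subseteq> a <# K"
  unfolding l_coset_def by auto

end

section \<open>Digit expansion in a well-ordered group\<close>

locale well_ordered_group = group G for G (structure) +
  fixes r :: "('a \<times> 'a) set"
  assumes well_order: "well_order_on (carrier G) r"
    and no_greatest: "a \<in> carrier G \<Longrightarrow> \<exists>b\<in>carrier G. (a, b) \<in> r \<and> a \<noteq> b"
begin

lemma Field_eq [simp]: "Field r = carrier G"
  using well_order_on_Field[OF well_order] by simp

sublocale wo_rel r
  using well_order by (simp add: wo_rel_def)

lemma rel_refl: "a \<in> carrier G \<Longrightarrow> (a, a) \<in> r"
  using REFL by (simp add: refl_on_def)

lemma rel_trans: "(a, b) \<in> r \<Longrightarrow> (b, c) \<in> r \<Longrightarrow> (a, c) \<in> r"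
  using TRANS by (rule transD)

lemma rel_antisym: "(a, b) \<in> r \<Longrightarrow> (b, a) \<in> r \<Longrightarrow> a = b"
  using ANTISYM by (rule antisymD)

lemma rel_total: "a \<in> carrier G \<Longrightarrow> b \<in> carrier G \<Longrightarrow> (a, b) \<in> r \<or> (b, a) \<in> r"
  using TOTALS by simp

lemma rel_carrier: "(a, b) \<in> r \<Longrightarrow> a \<in> carrier G \<and> b \<in> carrier G"
  using FieldI1 FieldI2 Field_eq by metis

lemma finite_has_strict_upper_bound:
  assumes "finite F" "F \<subseteq> carrier G"
  shows "\<exists>\<mu>\<in>carrier G. \<forall>i\<in>F. (i, \<mu>) \<in> r \<and> i \<noteq> \<mu>"
proof -
  obtain k where k: "k \<in> insert \<one> F" "\<forall>j\<in>insert \<one> F. (j, k) \<in> r"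
    using finite_has_greatest[of "insert \<one> F"] assms by auto
  obtain \<mu> where "\<mu> \<in> carrier G" "(k, \<mu>) \<in> r" "k \<noteq> \<mu>"
    using no_greatest k(1) assms(2) by blast
  then show ?thesis using k rel_trans rel_antisym by blast
qed

lemma wf_strict: "wf (r - Id)"
  using WELL by (simp add: well_order_on_def)

definition subgroup_below :: "'a \<Rightarrow> 'a set" where
  "subgroup_below l = generate G (underS l)"

definition subgroup_upto :: "'a \<Rightarrow> 'a set" where
  "subgroup_upto l = generate G (under l)"

lemma subgroup_subgroup_below: "subgroup (subgroup_below l) G"
  unfolding subgroup_below_def by (rule generate_is_subgroup) (use underS_Field[of _ r l] in auto)

lemma subgroup_subgroup_upto: "subgroup (subgroup_upto l) G"
  unfolding subgroup_upto_def by (rule generate_is_subgroup) (use under_Field[of r l] in auto)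

lemma subgroup_below_subset_upto: "subgroup_below l \<subseteq> subgroup_upto l"
  unfolding subgroup_below_def subgroup_upto_def by (rule mono_generate) (rule underS_subset_under)

lemma subgroup_upto_mono: "(l, m) \<in> r \<Longrightarrow> subgroup_upto l \<subseteq> subgroup_upto m"
  unfolding subgroup_upto_def by (rule mono_generate) (auto simp: under_def intro: rel_trans)

lemma subgroup_upto_subset_below: "(l, m) \<in> r \<Longrightarrow> l \<noteq> m \<Longrightarrow> subgroup_upto l \<subseteq> subgroup_below m"
  unfolding subgroup_upto_def subgroup_below_def
  by (rule mono_generate) (auto simp: under_def underS_def intro: rel_trans dest: rel_antisym)

lemma subgroup_below_mono: "(l, m) \<in> r \<Longrightarrow> subgroup_below l \<subseteq> subgroup_below m"
  using subgroup_below_subset_upto subgroup_upto_subset_below by (cases "l = m") blast+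

lemma subgroup_below_eq_UN_upto:
  assumes "underS m \<noteq> {}"
  shows "subgroup_below m = (\<Union>k\<in>underS m. subgroup_upto k)"
proof
  show "(\<Union>k\<in>underS m. subgroup_upto k) \<subseteq> subgroup_below m"
    using subgroup_upto_subset_below by (auto simp: underS_def)
next
  show "subgroup_below m \<subseteq> (\<Union>k\<in>underS m. subgroup_upto k)"
    unfolding subgroup_below_def
  proof
    fix x assume "x \<in> generate G (underS m)"
    then show "x \<in> (\<Union>k\<in>underS m. subgroup_upto k)"
    proof (induction x rule: generate.induct)
      case one
      then show ?case using assms subgroup.one_closed[OF subgroup_subgroup_upto] by blast
    next
      case (incl h)
      then have "h \<in> carrier G" using underS_Field[of h r m] by simp
      then have "h \<in> subgroup_upto h"
        unfolding subgroup_upto_def using rel_refl by (auto simp: under_def intro!: generate.incl)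
      then show ?case using incl by blast
    next
      case (inv h)
      then have "h \<in> carrier G" using underS_Field[of h r m] by simp
      then have "inv h \<in> subgroup_upto h"
        unfolding subgroup_upto_def using rel_refl by (auto simp: under_def intro!: generate.inv)
      then show ?case using inv by blast
    next
      case (eng h1 h2)
      then obtain k1 k2 where k: "k1 \<in> underS m" "k2 \<in> underS m"
        "h1 \<in> subgroup_upto k1" "h2 \<in> subgroup_upto k2" by blast
      have F: "k1 \<in> Field r" "k2 \<in> Field r" using k(1,2) underS_Field by fastforce+
      have "h1 \<in> subgroup_upto (max2 k1 k2)" "h2 \<in> subgroup_upto (max2 k1 k2)"
        using k(3,4) subgroup_upto_mono max2_greater[OF F] by blast+
      then have "h1 \<otimes> h2 \<in> subgroup_upto (max2 k1 k2)"
        by (rule subgroup.m_closed[OF subgroup_subgroup_upto])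
      moreover have "max2 k1 k2 \<in> underS m" using max2_among[OF F] k(1,2) by auto
      ultimately show ?case by blast
    qed
  qed
qed

lemma subgroup_below_imp_upto:
  assumes x: "x \<in> subgroup_below \<nu>" and l\<nu>: "(l, \<nu>) \<in> r" "l \<noteq> \<nu>"
  shows "\<exists>k. (l, k) \<in> r \<and> (k, \<nu>) \<in> r \<and> k \<noteq> \<nu> \<and> x \<in> subgroup_upto k"
proof -
  have l_below: "l \<in> underS \<nu>" using l\<nu> by (simp add: underS_def)
  then obtain k where k: "k \<in> underS \<nu>" "x \<in> subgroup_upto k"
    using subgroup_below_eq_UN_upto x by blast
  have F: "k \<in> Field r" "l \<in> Field r" using k(1) l_below by (auto dest: underS_Field)
  have "max2 k l \<in> underS \<nu>" using max2_among[OF F] k(1) l_below by auto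
  moreover have "(l, max2 k l) \<in> r" "x \<in> subgroup_upto (max2 k l)"
    using max2_greater[OF F] k(2) subgroup_upto_mono by blast+
  ultimately show ?thesis by (auto simp: underS_def)
qed

lemma subgroup_below_minim: "subgroup_below (minim (carrier G)) = {\<one>}"
proof -
  have "underS (minim (carrier G)) = {}"
    using minim_least[of "carrier G"] rel_antisym by (auto simp: underS_def dest: rel_carrier)
  then show ?thesis unfolding subgroup_below_def using generate_empty by simp
qed

lemma minim_l_coset_in:
  assumes H: "subgroup H G" and a: "a \<in> carrier G"
  shows "minim (a <# H) \<in> a <# H"
proof -
  have "a <# H \<subseteq> Field r" "a <# H \<noteq> {}"
    using l_coset_subset_G[OF subgroup.subset[OF H] a] lcos_self[OF a H] by auto
  then show ?thesis by (rule minim_in)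
qed

lemma minim_l_coset_eq_iff:
  assumes H: "subgroup H G" and a: "a \<in> carrier G" and b: "b \<in> carrier G"
  shows "minim (a <# H) = minim (b <# H) \<longleftrightarrow> a <# H = b <# H"
proof
  assume "minim (a <# H) = minim (b <# H)"
  then show "a <# H = b <# H"
    using l_repr_independence[OF minim_l_coset_in[OF H a] a H]
      l_repr_independence[OF minim_l_coset_in[OF H b] b H] by simp
qed simp

lemma minim_subset:
  assumes C: "C \<subseteq> carrier G" and D: "D \<subseteq> C" "minim C \<in> D"
  shows "minim D = minim C"
proof -
  have "D \<subseteq> Field r" "D \<noteq> {}" using C D by auto
  then have "minim D \<in> C" "(minim D, minim C) \<in> r" using minim_in minim_least D by blast+
  moreover have "(minim C, minim D) \<in> r" using minim_least C \<open>minim D \<in> C\<close> by simp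
  ultimately show ?thesis using rel_antisym by blast
qed

lemma inv_minim_l_coset_mult:
  assumes H: "subgroup H G" and g: "g \<in> carrier G"
  shows "minim (g <# H) \<in> carrier G" and "inv (minim (g <# H)) \<otimes> g \<in> H"
proof -
  have c: "minim (g <# H) \<in> g <# H" by (rule minim_l_coset_in[OF H g])
  then show "minim (g <# H) \<in> carrier G" using l_coset_carrier[OF _ g H] by blast
  then show "inv (minim (g <# H)) \<otimes> g \<in> H"
    using l_repr_independence[OF c g H] l_coset_eq_iff[OF H] g by blast
qed

definition coord :: "'a \<Rightarrow> 'a \<Rightarrow> 'a" where
  "coord g l = (if l \<in> carrier G
     then minim ((inv (minim (g <# subgroup_upto l)) \<otimes> g) <# subgroup_below l)
     else undefined)"

definition digits :: "'a \<Rightarrow> 'a set" where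
  "digits l = (\<lambda>y. minim (y <# subgroup_below l)) ` subgroup_upto l"

definition zero_digit :: "'a \<Rightarrow> 'a" where
  "zero_digit l = minim (subgroup_below l)"

lemma zero_digit_in_digits: "zero_digit l \<in> digits l"
proof -
  have "\<one> <# subgroup_below l = subgroup_below l"
    using lcos_mult_one[OF subgroup.subset[OF subgroup_subgroup_below]] .
  then show ?thesis unfolding zero_digit_def digits_def
    using subgroup.one_closed[OF subgroup_subgroup_upto] by (metis image_eqI)
qed

lemma coord_in_digits: "g \<in> carrier G \<Longrightarrow> l \<in> carrier G \<Longrightarrow> coord g l \<in> digits l"
  unfolding coord_def digits_def using inv_minim_l_coset_mult[OF subgroup_subgroup_upto] by auto

lemma coord_eq_iff:
  assumes x: "x \<in> carrier G" and g: "g \<in> carrier G" and l: "l \<in> carrier G"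
    and upto: "x <# subgroup_upto l = g <# subgroup_upto l"
  shows "coord x l = coord g l \<longleftrightarrow> x <# subgroup_below l = g <# subgroup_below l"
proof -
  define c where "c = minim (g <# subgroup_upto l)"
  have c: "c \<in> carrier G"
    unfolding c_def by (rule inv_minim_l_coset_mult(1)[OF subgroup_subgroup_upto g])
  have "coord x l = coord g l \<longleftrightarrow>
      (inv c \<otimes> x) <# subgroup_below l = (inv c \<otimes> g) <# subgroup_below l"
    unfolding coord_def c_def using upto l c_def c x g
    by (simp add: minim_l_coset_eq_iff[OF subgroup_subgroup_below])
  also have "\<dots> \<longleftrightarrow> x <# subgroup_below l = g <# subgroup_below l"
    using l_coset_eq_iff[OF subgroup_subgroup_below] inv_mult_cancel_left c x g by simp
  finally show ?thesis .
qed

lemma coord_eq_if_l_coset_eq: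
  assumes x: "x \<in> carrier G" and g: "g \<in> carrier G" and l: "l \<in> carrier G"
    and below: "x <# subgroup_below l = g <# subgroup_below l"
  shows "coord x l = coord g l"
proof -
  have "x <# subgroup_upto l = g <# subgroup_upto l"
    using below subgroup_below_subset_upto x g
    by (auto simp: l_coset_eq_iff[OF subgroup_subgroup_below] l_coset_eq_iff[OF subgroup_subgroup_upto])
  then show ?thesis using coord_eq_iff x g l below by blast
qed

lemma coord_eq_zero_digit_iff:
  assumes g: "g \<in> carrier G" and l: "l \<in> carrier G"
  shows "coord g l = zero_digit l \<longleftrightarrow> minim (g <# subgroup_upto l) \<in> g <# subgroup_below l"
proof -
  define c where "c = minim (g <# subgroup_upto l)"
  have c: "c \<in> carrier G"
    unfolding c_def by (rule inv_minim_l_coset_mult(1)[OF subgroup_subgroup_upto g])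
  have "zero_digit l = minim (\<one> <# subgroup_below l)"
    unfolding zero_digit_def using lcos_mult_one[OF subgroup.subset[OF subgroup_subgroup_below]] by simp
  then have "coord g l = zero_digit l \<longleftrightarrow>
      (inv c \<otimes> g) <# subgroup_below l = \<one> <# subgroup_below l"
    unfolding coord_def c_def using l c c_def g
    by (simp add: minim_l_coset_eq_iff[OF subgroup_subgroup_below])
  also have "\<dots> \<longleftrightarrow> inv g \<otimes> c \<in> subgroup_below l"
    using l_coset_eq_iff[OF subgroup_subgroup_below] c g by (simp add: inv_mult_group)
  also have "\<dots> \<longleftrightarrow> c \<in> g <# subgroup_below l"
    using l_coset_mem_iff[OF subgroup_subgroup_below g] c by blast
  finally show ?thesis unfolding c_def .
qed

lemma finite_coord_support:
  assumes g: "g \<in> carrier G"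
  shows "finite {l \<in> carrier G. coord g l \<noteq> zero_digit l}"
proof -
  let ?a = "\<lambda>l. minim (g <# subgroup_below l)"
  let ?S = "{l \<in> carrier G. minim (g <# subgroup_upto l) \<notin> g <# subgroup_below l}"
  \<comment> \<open>Along ?S the least elements of the growing cosets g L_l strictly decrease.\<close>
  have "finite ?S"
  proof (rule finite_if_strictly_antitone_into_wf[of "r - Id" r _ ?a])
    show "wf (r - Id)" by (rule wf_strict)
    fix l m assume l: "l \<in> ?S" and m: "m \<in> ?S" and lm: "(l, m) \<in> r" "l \<noteq> m"
    define b where "b = minim (g <# subgroup_upto l)"
    have b: "b \<in> g <# subgroup_upto l" "b \<notin> g <# subgroup_below l"
      using l minim_l_coset_in[OF subgroup_subgroup_upto g] unfolding b_def by auto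
    have al: "?a l \<in> g <# subgroup_upto l"
      using minim_l_coset_in[OF subgroup_subgroup_below g] l_coset_mono[OF subgroup_below_subset_upto]
      by blast
    have upto_carrier: "g <# subgroup_upto l \<subseteq> carrier G"
      by (rule l_coset_subset_G[OF subgroup.subset[OF subgroup_subgroup_upto] g])
    have ba: "(b, ?a l) \<in> r" using minim_least al upto_carrier unfolding b_def by simp
    have "b \<in> g <# subgroup_below m"
      using b(1) l_coset_mono[OF subgroup_upto_subset_below[OF lm]] by blast
    then have ab: "(?a m, b) \<in> r"
      using minim_least l_coset_subset_G[OF subgroup.subset[OF subgroup_subgroup_below] g] by simp
    have "b \<noteq> ?a l"
      using b(2) minim_l_coset_in[OF subgroup_subgroup_below g, of l] by force
    then have "?a m \<noteq> ?a l" using ab ba rel_antisym by force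
    then show "(?a m, ?a l) \<in> r - Id" using rel_trans[OF ab ba] by simp
  qed (use WELL in auto)
  moreover have "{l \<in> carrier G. coord g l \<noteq> zero_digit l} = ?S"
    using coord_eq_zero_digit_iff[OF g] by blast
  ultimately show ?thesis by simp
qed

lemma coord_in_dprod:
  assumes "g \<in> carrier G"
  shows "coord g \<in> dprod r digits zero_digit"
proof -
  have "\<forall>i. i \<notin> carrier G \<longrightarrow> coord g i = undefined" by (simp add: coord_def)
  then show ?thesis
    unfolding dprod_def Field_eq using coord_in_digits[OF assms] finite_coord_support[OF assms] by blast
qed

lemma l_coset_eq_if_coord_tail_eq:
  assumes x: "x \<in> carrier G" and g: "g \<in> carrier G" and l: "l \<in> carrier G"
    and agree: "\<forall>j. (l, j) \<in> r \<longrightarrow> coord x j = coord g j"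
  shows "x <# subgroup_below l = g <# subgroup_below l"
proof -
  define d where "d = inv x \<otimes> g"
  have d: "d \<in> carrier G" unfolding d_def using x g by simp
  let ?N = "{m. (l, m) \<in> r \<and> d \<in> subgroup_upto m}"
  have d_upto: "d \<in> subgroup_upto d"
    unfolding subgroup_upto_def using d rel_refl by (auto simp: under_def intro!: generate.incl)
  have "?N \<noteq> {}"
  proof (cases "(l, d) \<in> r")
    case False
    then have "d \<in> subgroup_upto l" using rel_total[OF l d] d_upto subgroup_upto_mono by blast
    then show ?thesis using rel_refl[OF l] by blast
  qed (use d_upto in blast)
  moreover have "?N \<subseteq> Field r" using rel_carrier by auto
  ultimately have "minim ?N \<in> ?N" and "\<And>m. m \<in> ?N \<Longrightarrow> (minim ?N, m) \<in> r"
    using minim_in minim_least by blast+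
  then obtain \<nu> where \<nu>: "(l, \<nu>) \<in> r" "d \<in> subgroup_upto \<nu>"
    and least: "\<And>m. m \<in> ?N \<Longrightarrow> (\<nu>, m) \<in> r"
    by blast
  have \<nu>_carrier: "\<nu> \<in> carrier G" using rel_carrier[OF \<nu>(1)] by blast
  have "x <# subgroup_upto \<nu> = g <# subgroup_upto \<nu>"
    using l_coset_eq_iff[OF subgroup_subgroup_upto x g] \<nu>(2) d_def by blast
  then have "x <# subgroup_below \<nu> = g <# subgroup_below \<nu>"
    using coord_eq_iff[OF x g \<nu>_carrier] agree \<nu>(1) by blast
  then have d_below: "d \<in> subgroup_below \<nu>"
    using l_coset_eq_iff[OF subgroup_subgroup_below x g] d_def by blast
  have "\<nu> = l"
  proof (rule ccontr)
    assume "\<nu> \<noteq> l"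
    then obtain k where "(l, k) \<in> r" "(k, \<nu>) \<in> r" "k \<noteq> \<nu>" "d \<in> subgroup_upto k"
      using subgroup_below_imp_upto[OF d_below \<nu>(1)] by metis
    then show False using least rel_antisym by blast
  qed
  then show ?thesis using d_below l_coset_eq_iff[OF subgroup_subgroup_below x g] d_def by blast
qed

lemma coord_tail_eq_iff:
  assumes x: "x \<in> carrier G" and g: "g \<in> carrier G" and l: "l \<in> carrier G"
  shows "(\<forall>j. (l, j) \<in> r \<longrightarrow> coord x j = coord g j) \<longleftrightarrow>
    x <# subgroup_below l = g <# subgroup_below l"
proof
  assume "x <# subgroup_below l = g <# subgroup_below l"
  then have xg: "inv x \<otimes> g \<in> subgroup_below l"
    using l_coset_eq_iff[OF subgroup_subgroup_below x g] by blast
  show "\<forall>j. (l, j) \<in> r \<longrightarrow> coord x j = coord g j"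
  proof (intro allI impI)
    fix j assume lj: "(l, j) \<in> r"
    then have "inv x \<otimes> g \<in> subgroup_below j" using subgroup_below_mono xg by blast
    then show "coord x j = coord g j"
      using coord_eq_if_l_coset_eq[OF x g] l_coset_eq_iff[OF subgroup_subgroup_below x g] rel_carrier[OF lj]
      by blast
  qed
qed (rule l_coset_eq_if_coord_tail_eq[OF x g l])


lemma inj_on_coord: "inj_on coord (carrier G)"
proof (rule inj_onI)
  fix x g assume x: "x \<in> carrier G" and g: "g \<in> carrier G" and eq: "coord x = coord g"
  have "carrier G \<subseteq> Field r" "carrier G \<noteq> {}" using x by auto
  then have "minim (carrier G) \<in> carrier G" by (rule minim_in)
  moreover have "\<forall>j. (minim (carrier G), j) \<in> r \<longrightarrow> coord x j = coord g j" using eq by simp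
  ultimately have "x <# subgroup_below (minim (carrier G)) = g <# subgroup_below (minim (carrier G))"
    using coord_tail_eq_iff[OF x g] by blast
  moreover have "a <# subgroup_below (minim (carrier G)) = {a}" if "a \<in> carrier G" for a
    unfolding subgroup_below_minim l_coset_def using that by simp
  ultimately show "x = g" using x g by simp
qed

lemma coord_mult_upto:
  assumes s: "s \<in> carrier G" and \<nu>: "\<nu> \<in> carrier G" and y: "y \<in> subgroup_upto \<nu>"
    and minim_s: "minim (s <# subgroup_upto \<nu>) = s"
  shows "coord (s \<otimes> y) \<nu> = minim (y <# subgroup_below \<nu>)"
proof -
  have y_carrier: "y \<in> carrier G" using y subgroup.subset[OF subgroup_subgroup_upto] by blast
  have "inv s \<otimes> (s \<otimes> y) = y" using s y_carrier by (simp add: m_assoc[symmetric])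
  then show ?thesis
    unfolding coord_def using \<nu> minim_s l_coset_mult_eq[OF subgroup_subgroup_upto s y] by simp
qed

lemma coord_mult_upto_above:
  assumes s: "s \<in> carrier G" and y: "y \<in> subgroup_upto \<nu>" and \<nu>k: "(\<nu>, k) \<in> r" "\<nu> \<noteq> k"
  shows "coord (s \<otimes> y) k = coord s k"
proof -
  have y_below: "y \<in> subgroup_below k" using y subgroup_upto_subset_below[OF \<nu>k] by blast
  then have "s \<otimes> y \<in> carrier G" using s subgroup.subset[OF subgroup_subgroup_below] by blast
  then show ?thesis
    using coord_eq_if_l_coset_eq[OF _ s _ l_coset_mult_eq[OF subgroup_subgroup_below s y_below]]
      rel_carrier[OF \<nu>k(1)] by blast
qed

text \<open>The greatest wrong digit below \<mu> is corrected by a right factor from U_\<nu>, which leaves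
  all digits above \<nu> unchanged.\<close>

lemma coord_surj_step:
  assumes \<mu>: "\<mu> \<in> carrier G" and s: "s \<in> carrier G" and minim_s: "minim (s <# subgroup_below \<mu>) = s"
    and f: "f \<in> dprod r digits zero_digit" and agree: "\<forall>k. (\<mu>, k) \<in> r \<longrightarrow> f k = coord s k"
    and disagree: "(\<nu>\<^sub>0, \<mu>) \<in> r" "\<nu>\<^sub>0 \<noteq> \<mu>" "f \<nu>\<^sub>0 \<noteq> coord s \<nu>\<^sub>0"
  shows "\<exists>\<nu> d. (\<nu>, \<mu>) \<in> r \<and> \<nu> \<noteq> \<mu> \<and> d \<in> carrier G \<and> d <# subgroup_below \<nu> \<subseteq> s <# subgroup_below \<mu>
    \<and> (\<forall>k. (\<nu>, k) \<in> r \<longrightarrow> f k = coord d k)"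
proof -
  define S where "S = {\<nu>. (\<nu>, \<mu>) \<in> r \<and> \<nu> \<noteq> \<mu> \<and> f \<nu> \<noteq> coord s \<nu>}"
  have "S \<subseteq> {i \<in> carrier G. f i \<noteq> zero_digit i} \<union> {i \<in> carrier G. coord s i \<noteq> zero_digit i}"
    unfolding S_def using rel_carrier by auto
  moreover have "finite {i \<in> carrier G. f i \<noteq> zero_digit i}" using f by (simp add: dprod_def)
  ultimately have "finite S" using finite_coord_support[OF s] finite_subset by blast
  moreover have "S \<subseteq> Field r" "S \<noteq> {}" unfolding S_def using rel_carrier disagree by auto
  ultimately obtain \<nu> where "\<nu> \<in> S" and greatest: "\<forall>j\<in>S. (j, \<nu>) \<in> r"
    using finite_has_greatest by blast
  then have \<nu>\<mu>: "(\<nu>, \<mu>) \<in> r" "\<nu> \<noteq> \<mu>" and \<nu>: "\<nu> \<in> carrier G"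
    unfolding S_def using rel_carrier by auto
  obtain y where y: "y \<in> subgroup_upto \<nu>" "f \<nu> = minim (y <# subgroup_below \<nu>)"
    using f \<nu> unfolding dprod_def digits_def by auto
  have y_carrier: "y \<in> carrier G" using y subgroup.subset[OF subgroup_subgroup_upto] by blast
  have s_upto: "s <# subgroup_upto \<nu> \<subseteq> s <# subgroup_below \<mu>"
    using l_coset_mono[OF subgroup_upto_subset_below[OF \<nu>\<mu>]] by simp
  have "minim (s <# subgroup_upto \<nu>) = s"
    using minim_subset[OF l_coset_subset_G[OF subgroup.subset[OF subgroup_subgroup_below] s] s_upto]
      lcos_self[OF s subgroup_subgroup_upto] minim_s by simp
  then have digit_\<nu>: "coord (s \<otimes> y) \<nu> = f \<nu>" using coord_mult_upto[OF s \<nu> y(1)] y(2) by simp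
  have "f k = coord (s \<otimes> y) k" if \<nu>k: "(\<nu>, k) \<in> r" for k
  proof (cases "k = \<nu>")
    case False
    then have "k \<notin> S" using greatest \<nu>k rel_antisym by blast
    then have "f k = coord s k" using agree rel_total[OF \<mu>] rel_carrier[OF \<nu>k] unfolding S_def by auto
    then show ?thesis using coord_mult_upto_above[OF s y(1) \<nu>k] False by simp
  qed (use digit_\<nu> in simp)
  moreover have "(s \<otimes> y) <# subgroup_below \<nu> \<subseteq> s <# subgroup_below \<mu>"
    using l_coset_mono[OF subgroup_below_subset_upto] l_coset_mult_eq[OF subgroup_subgroup_upto s y(1)] s_upto
    by blast
  ultimately show ?thesis using \<nu>\<mu> s y_carrier by blast
qed

lemma coord_surj_from:
  assumes "\<mu> \<in> carrier G" "d \<in> carrier G" "f \<in> dprod r digits zero_digit"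
    and "\<forall>k. (\<mu>, k) \<in> r \<longrightarrow> f k = coord d k"
  shows "\<exists>x \<in> d <# subgroup_below \<mu>. coord x = f"
  using wf_strict assms
proof (induction \<mu> arbitrary: d rule: wf_induct_rule)
  case (less \<mu> d)
  note \<mu> = less.prems(1) and d = less.prems(2) and f = less.prems(3)
  define s where "s = minim (d <# subgroup_below \<mu>)"
  have s_in: "s \<in> d <# subgroup_below \<mu>"
    unfolding s_def by (rule minim_l_coset_in[OF subgroup_subgroup_below d])
  have s: "s \<in> carrier G" using l_coset_carrier[OF s_in d subgroup_subgroup_below] .
  have d_s: "d <# subgroup_below \<mu> = s <# subgroup_below \<mu>"
    by (rule l_repr_independence[OF s_in d subgroup_subgroup_below])
  have agree: "\<forall>k. (\<mu>, k) \<in> r \<longrightarrow> f k = coord s k"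
    using less.prems(4) coord_tail_eq_iff[OF d s \<mu>] d_s by simp
  show ?case
  proof (cases "\<exists>\<nu>. (\<nu>, \<mu>) \<in> r \<and> \<nu> \<noteq> \<mu> \<and> f \<nu> \<noteq> coord s \<nu>")
    case True
    then obtain \<nu>\<^sub>0 where disagree: "(\<nu>\<^sub>0, \<mu>) \<in> r" "\<nu>\<^sub>0 \<noteq> \<mu>" "f \<nu>\<^sub>0 \<noteq> coord s \<nu>\<^sub>0" by blast
    have "minim (s <# subgroup_below \<mu>) = s" using d_s s_def by simp
    then obtain \<nu> d' where \<nu>: "(\<nu>, \<mu>) \<in> r" "\<nu> \<noteq> \<mu>" and d': "d' \<in> carrier G"
      and sub: "d' <# subgroup_below \<nu> \<subseteq> s <# subgroup_below \<mu>"
      and agree': "\<forall>k. (\<nu>, k) \<in> r \<longrightarrow> f k = coord d' k"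
      using coord_surj_step[OF \<mu> s _ f agree disagree] by blast
    have "(\<nu>, \<mu>) \<in> r - Id" "\<nu> \<in> carrier G" using \<nu> rel_carrier by auto
    then obtain x where "x \<in> d' <# subgroup_below \<nu>" "coord x = f"
      using less.IH[OF _ _ d' f agree'] by blast
    then show ?thesis using sub d_s by blast
  next
    case False
    have "coord s k = f k" for k
    proof (cases "k \<in> carrier G")
      case True
      then show ?thesis using False agree rel_total[OF \<mu> True] rel_refl[OF \<mu>] by auto
    qed (use f in \<open>simp add: dprod_def coord_def\<close>)
    then show ?thesis using s_in by blast
  qed
qed

lemma coord_surj:
  assumes f: "f \<in> dprod r digits zero_digit"
  shows "\<exists>x\<in>carrier G. coord x = f"
proof -
  let ?supp = "\<lambda>h. {i \<in> carrier G. h i \<noteq> zero_digit i}"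
  have "finite (?supp f \<union> ?supp (coord \<one>))"
    using f finite_coord_support[OF one_closed] by (simp add: dprod_def)
  then obtain \<mu> where \<mu>: "\<mu> \<in> carrier G"
    and above: "\<And>i. i \<in> ?supp f \<union> ?supp (coord \<one>) \<Longrightarrow> (i, \<mu>) \<in> r \<and> i \<noteq> \<mu>"
    using finite_has_strict_upper_bound[of "?supp f \<union> ?supp (coord \<one>)"] by auto
  have "f k = coord \<one> k" if "(\<mu>, k) \<in> r" for k
  proof -
    have "k \<notin> ?supp f \<union> ?supp (coord \<one>)" using above that rel_antisym by blast
    then show ?thesis using rel_carrier[OF that] by auto
  qed
  then obtain x where "x \<in> \<one> <# subgroup_below \<mu>" "coord x = f"
    using coord_surj_from[OF \<mu> one_closed f] by blast
  then show ?thesis using l_coset_carrier[OF _ one_closed subgroup_subgroup_below] by blast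
qed

lemma bij_betw_coord: "bij_betw coord (carrier G) (dprod r digits zero_digit)"
  unfolding bij_betw_def using inj_on_coord coord_in_dprod coord_surj by blast

lemma dprod_ball_coord:
  assumes x: "x \<in> carrier G" and l: "l \<in> carrier G"
  shows "dprod_ball r digits zero_digit (coord x) l = coord ` (x <# subgroup_below l)"
proof
  show "dprod_ball r digits zero_digit (coord x) l \<subseteq> coord ` (x <# subgroup_below l)"
  proof
    fix v assume v: "v \<in> dprod_ball r digits zero_digit (coord x) l"
    then have "v \<in> dprod r digits zero_digit" by (simp add: dprod_ball_def)
    then obtain y where y: "y \<in> carrier G" "v = coord y" using coord_surj by blast
    have "\<forall>j. (l, j) \<in> r \<longrightarrow> coord x j = coord y j"
    proof (intro allI impI)
      fix j assume "(l, j) \<in> r"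
      then show "coord x j = coord y j" using v y(2) rel_carrier[of l j] by (simp add: dprod_ball_def)
    qed
    then have "x <# subgroup_below l = y <# subgroup_below l" using coord_tail_eq_iff[OF x y(1) l] by blast
    then have "y \<in> x <# subgroup_below l" using lcos_self[OF y(1) subgroup_subgroup_below] by simp
    then show "v \<in> coord ` (x <# subgroup_below l)" using y(2) by blast
  qed
next
  show "coord ` (x <# subgroup_below l) \<subseteq> dprod_ball r digits zero_digit (coord x) l"
  proof
    fix v assume "v \<in> coord ` (x <# subgroup_below l)"
    then obtain y where y: "y \<in> x <# subgroup_below l" "v = coord y" by blast
    have y_carrier: "y \<in> carrier G" using l_coset_carrier[OF y(1) x subgroup_subgroup_below] .
    have "x <# subgroup_below l = y <# subgroup_below l"
      by (rule l_repr_independence[OF y(1) x subgroup_subgroup_below])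
    then have "\<forall>j. (l, j) \<in> r \<longrightarrow> coord x j = coord y j" using coord_tail_eq_iff[OF x y_carrier l] by blast
    then show "v \<in> dprod_ball r digits zero_digit (coord x) l"
      unfolding dprod_ball_def using y(2) coord_in_dprod[OF y_carrier] by simp
  qed
qed

end

section \<open>Groups of uncountable regular cardinality\<close>

locale uncountable_regular_group = group +
  assumes uncountable: "\<not> countable (carrier G)"
    and regular: "regularCard |carrier G|"

sublocale uncountable_regular_group \<subseteq> well_ordered_group G "|carrier G|"
proof
  show "well_order_on (carrier G) |carrier G|" by (rule card_of_well_order_on)
  have "\<not> finite (Field (card_of (carrier G)))" using uncountable countable_finite by (auto simp: Field_card_of)
  then show "\<exists>b\<in>carrier G. (a, b) \<in> card_of (carrier G) \<and> a \<noteq> b" if "a \<in> carrier G" for a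
    using infinite_Card_order_limit[OF card_of_Card_order _ , of "carrier G" a] that
    by (auto simp: Field_card_of)
qed

context uncountable_regular_group
begin

lemma card_of_subgroup_below: "l \<in> carrier G \<Longrightarrow> |subgroup_below l| <o |carrier G|"
proof -
  assume l: "l \<in> carrier G"
  have "|UNIV :: nat set| <o |carrier G|" by (rule card_of_nat_ordLess[OF uncountable])
  moreover have "underS l \<subseteq> carrier G"
    using underS_Field[of _ "card_of (carrier G)" l] by auto
  moreover have "|underS l| <o |carrier G|"
    using card_of_underS[OF card_of_Card_order] l by (simp add: Field_card_of)
  ultimately show ?thesis unfolding subgroup_below_def
    using card_of_generate_ordLess[OF card_of_Card_order regular] by blast
qed

lemma subgroup_below_in_group_params: "l \<in> carrier G \<Longrightarrow> subgroup_below l \<in> group_params G"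
  unfolding group_params_def using card_of_subgroup_below subgroup.subset[OF subgroup_subgroup_below]
    subgroup.one_closed[OF subgroup_subgroup_below] by simp

lemma group_params_subset_below:
  assumes "A \<in> group_params G"
  shows "\<exists>l\<in>carrier G. A \<subseteq> subgroup_below l"
proof -
  have "A \<subseteq> Field (card_of (carrier G))" "|A| <o |carrier G|"
    using assms unfolding group_params_def by auto
  then have "\<exists>a\<in>Field (card_of (carrier G)). A \<subseteq> under a"
    by (rule regularCard_ordLess_bounded[OF card_of_Card_order regular])
  then obtain a where a: "a \<in> carrier G" "A \<subseteq> under a" by (auto simp: Field_card_of)
  then obtain l where l: "l \<in> carrier G" "(a, l) \<in> card_of (carrier G)" "a \<noteq> l"
    using no_greatest by blast
  have "under a \<subseteq> subgroup_upto a" unfolding subgroup_upto_def by (auto intro: generate.incl)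
  then show ?thesis using a(2) subgroup_upto_subset_below[OF l(2,3)] l(1) by blast
qed

lemma prec_mapping_coord:
  "prec_mapping (carrier G) (group_params G) (group_ball G)
     (dprod (card_of (carrier G)) digits zero_digit) (carrier G) (dprod_ball (card_of (carrier G)) digits zero_digit) coord"
  unfolding prec_mapping_def
proof (intro ballI)
  fix A assume "A \<in> group_params G"
  then obtain l where l: "l \<in> carrier G" "A \<subseteq> subgroup_below l" using group_params_subset_below by blast
  have "coord ` group_ball G x A \<subseteq> dprod_ball (card_of (carrier G)) digits zero_digit (coord x) l" if "x \<in> carrier G" for x
    unfolding group_ball_def dprod_ball_coord[OF that l(1)] using l_coset_mono[OF l(2)] by blast
  then show "\<exists>\<beta>\<in>carrier G. \<forall>x\<in>carrier G.
      coord ` group_ball G x A \<subseteq> dprod_ball (card_of (carrier G)) digits zero_digit (coord x) \<beta>"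
    using l(1) by blast
qed

lemma prec_mapping_inv_coord:
  "prec_mapping (dprod (card_of (carrier G)) digits zero_digit) (carrier G) (dprod_ball (card_of (carrier G)) digits zero_digit)
     (carrier G) (group_params G) (group_ball G) (inv_into (carrier G) coord)"
  unfolding prec_mapping_def
proof (intro ballI bexI[OF _ subgroup_below_in_group_params])
  fix l f assume l: "l \<in> carrier G" and f: "f \<in> dprod (card_of (carrier G)) digits zero_digit"
  define x where "x = inv_into (carrier G) coord f"
  have x: "x \<in> carrier G" "coord x = f"
    unfolding x_def using f bij_betw_coord by (auto intro: inv_into_into f_inv_into_f simp: bij_betw_def)
  have "inv_into (carrier G) coord ` coord ` (x <# subgroup_below l) = x <# subgroup_below l"
    using inv_into_image_cancel[OF inj_on_coord] l_coset_subset_G[OF subgroup.subset[OF subgroup_subgroup_below] x(1)]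
    by blast
  then show "inv_into (carrier G) coord ` dprod_ball (card_of (carrier G)) digits zero_digit f l
      \<subseteq> group_ball G (inv_into (carrier G) coord f) (subgroup_below l)"
    unfolding group_ball_def using dprod_ball_coord[OF x(1) l] x(2) x_def by simp
qed

end

theorem corollary2:
  fixes G :: "('a, 'b) monoid_scheme"
  assumes "group G"
    and "\<not> countable (carrier G)"
    and "regularCard (card_of (carrier G))"
  shows "\<exists>(r :: ('a \<times> 'a) set) (Zs :: 'a \<Rightarrow> 'a set) (e :: 'a \<Rightarrow> 'a) (h :: 'a \<Rightarrow> ('a \<Rightarrow> 'a)).
           Well_order r \<and> (\<forall>i\<in>Field r. Zs i \<noteq> {} \<and> e i \<in> Zs i) \<and>
           asymorphism (carrier G) (group_params G) (group_ball G)
                       (dprod r Zs e) (Field r) (dprod_ball r Zs e) h"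
proof -
  interpret uncountable_regular_group G
    using assms by (simp add: uncountable_regular_group_def uncountable_regular_group_axioms_def)
  have "asymorphism (carrier G) (group_params G) (group_ball G)
      (dprod (card_of (carrier G)) digits zero_digit) (Field (card_of (carrier G))) (dprod_ball (card_of (carrier G)) digits zero_digit) coord"
    unfolding asymorphism_def Field_card_of
    using bij_betw_coord prec_mapping_coord prec_mapping_inv_coord by blast
  then show ?thesis using card_of_Well_order zero_digit_in_digits by blast
qed

end
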